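(* Let $(A,B,R)$ be a formal context whose concept lattice $\mathcal C(A,B,R)$ has no infinite chains, and let $C_l\in\mathcal C(A,B,R)$ be a meet-irreducible concept. Let $(A^*,B,R^* )$ be the context produced by Construction M below. Then $(\mathcal C(A,B,R)\setminus\{C_l\},\le)\cong(\mathcal C(A^*,B,R^* ),\le^* )$. Construction M. Let $\mathcal S(C_l)=\{C\in\mathcal C(A,B,R)\mid C<C_l\}$ and $C_l^s=\bigvee\mathcal S(C_l)$ (the bottom if $\mathcal S(C_l)=\varnothing$). Put $A'=A\setminus\mathrm{Atg}(C_l)$. (1) If $C_l^s\neq C_l$: if there exists a meet-decomposition of $C_l^s$ not containing $C_l$, or $\mathrm{Atg}(C_l^s)\neq\varnothing$, then $A^*=A'$ and $R^*=R\cap(A^*\times B)$. Otherwise $A^*=A'\cup\{a^*\}$ for a new attribute $a^*\notin A$ and $R^*=(R\cap(A'\times B))\cup\{(a^*,b)\mid b\in\mathcal E(C_l^s)\}$. (2) If $C_l^s=C_l$: let $\{C_l^{s_i}\mid i\in\Gamma\}$ be the maximal elements of $\mathcal S(C_l)$ and $\Gamma'=\{i\in\Gamma\mid$ every meet-decomposition of $C_l^{s_i}$ contains $C_l$, and $\mathrm{Atg}(C_l^{s_i})=\varnothing\}$. If $\Gamma'=\varnothing$, then $A^*=A'$ and $R^*=R\cap(A^*\times B)$. Otherwise $A^*=A'\cup\{a_i^*\mid i\in\Gamma'\}$ with pairwise distinct new attributes and $R^*=(R\cap(A'\times B))\cup\{(a_i^*,b)\mid i\in\Gamma',\ b\in\mathcal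 E(C_l^{s_i})\}$.
   Context: Formal context $(A,B,R)$, $R\subseteq A\times B$; $X^{\uparrow}=\{a\in A\mid (a,x)\in R\ \forall x\in X\}$, $Y^{\downarrow}=\{x\in B\mid (a,x)\in R\ \forall a\in Y\}$; concepts are pairs $(X,Y)$ with $X^\uparrow=Y$, $Y^\downarrow=X$, ordered by inclusion of extents; $\mathcal E(C)$ denotes the extent of concept $C$. $\mathrm{Atg}(C)=\{a\in A\mid (\{a\}^{\downarrow},\{a\}^{\downarrow\uparrow})=C\}$ (attributes generating $C$). A concept is meet-irreducible if it is not the top and is not the meet of two concepts both different from it. A meet-decomposition of a concept $C$ is a set $\psi$ of concepts with $C\notin\psi$ and $\bigwedge\psi=C$. $\le^*$ is the extent-inclusion order on $\mathcal C(A^*,B,R^* )$. *)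

theory Defs
  imports Main
begin

text \<open>Formal context (A,B,R) with R \<subseteq> A \<times> B. A concept is a pair (X,Y),
  X \<subseteq> B the extent, Y \<subseteq> A the intent.\<close>

definition up :: "'a set \<Rightarrow> ('a \<times> 'b) set \<Rightarrow> 'b set \<Rightarrow> 'a set" where
  "up A R X = {a \<in> A. \<forall>x\<in>X. (a, x) \<in> R}"

definition down :: "'b set \<Rightarrow> ('a \<times> 'b) set \<Rightarrow> 'a set \<Rightarrow> 'b set" where
  "down B R Y = {x \<in> B. \<forall>a\<in>Y. (a, x) \<in> R}"

definition concepts :: "'a set \<Rightarrow> 'b set \<Rightarrow> ('a \<times> 'b) set \<Rightarrow> ('b set \<times> 'a set) set" where
  "concepts A B R = {(X, Y). up A R X = Y \<and> down B R Y = X}"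

definition cle :: "('b set \<times> 'a set) \<Rightarrow> ('b set \<times> 'a set) \<Rightarrow> bool" where
  "cle C D \<longleftrightarrow> fst C \<subseteq> fst D"

definition is_glb :: "'a set \<Rightarrow> 'b set \<Rightarrow> ('a \<times> 'b) set \<Rightarrow> ('b set \<times> 'a set) set
    \<Rightarrow> ('b set \<times> 'a set) \<Rightarrow> bool" where
  "is_glb A B R \<psi> C \<longleftrightarrow> C \<in> concepts A B R \<and> (\<forall>D\<in>\<psi>. cle C D) \<and>
     (\<forall>E\<in>concepts A B R. (\<forall>D\<in>\<psi>. cle E D) \<longrightarrow> cle E C)"

definition is_lub :: "'a set \<Rightarrow> 'b set \<Rightarrow> ('a \<times> 'b) set \<Rightarrow> ('b set \<times> 'a set) set
    \<Rightarrow> ('b set \<times> 'a set) \<Rightarrow> bool" where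
  "is_lub A B R S C \<longleftrightarrow> C \<in> concepts A B R \<and> (\<forall>D\<in>S. cle D C) \<and>
     (\<forall>E\<in>concepts A B R. (\<forall>D\<in>S. cle D E) \<longrightarrow> cle C E)"

definition cjoin :: "'a set \<Rightarrow> 'b set \<Rightarrow> ('a \<times> 'b) set \<Rightarrow> ('b set \<times> 'a set) set
    \<Rightarrow> ('b set \<times> 'a set)" where
  "cjoin A B R S = (THE C. is_lub A B R S C)"

definition ctop :: "'a set \<Rightarrow> 'b set \<Rightarrow> ('a \<times> 'b) set \<Rightarrow> ('b set \<times> 'a set)" where
  "ctop A B R = (THE C. C \<in> concepts A B R \<and> (\<forall>D\<in>concepts A B R. cle D C))"

definition meet_irreducible :: "'a set \<Rightarrow> 'b set \<Rightarrow> ('a \<times> 'b) set \<Rightarrow> ('b set \<times> 'a set) \<Rightarrow> bool" where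
  "meet_irreducible A B R C \<longleftrightarrow> C \<in> concepts A B R \<and> C \<noteq> ctop A B R \<and>
     \<not> (\<exists>D1 D2. D1 \<in> concepts A B R \<and> D2 \<in> concepts A B R \<and> D1 \<noteq> C \<and> D2 \<noteq> C \<and>
               is_glb A B R {D1, D2} C)"

definition meet_decomposition :: "'a set \<Rightarrow> 'b set \<Rightarrow> ('a \<times> 'b) set \<Rightarrow> ('b set \<times> 'a set)
    \<Rightarrow> ('b set \<times> 'a set) set \<Rightarrow> bool" where
  "meet_decomposition A B R C \<psi> \<longleftrightarrow> \<psi> \<subseteq> concepts A B R \<and> C \<notin> \<psi> \<and> is_glb A B R \<psi> C"

definition Atg :: "'a set \<Rightarrow> 'b set \<Rightarrow> ('a \<times> 'b) set \<Rightarrow> ('b set \<times> 'a set) \<Rightarrow> 'a set" where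
  "Atg A B R C = {a \<in> A. (down B R {a}, up A R (down B R {a})) = C}"

definition no_infinite_chains :: "'a set \<Rightarrow> 'b set \<Rightarrow> ('a \<times> 'b) set \<Rightarrow> bool" where
  "no_infinite_chains A B R \<longleftrightarrow>
     (\<forall>Ch \<subseteq> concepts A B R. (\<forall>C\<in>Ch. \<forall>D\<in>Ch. cle C D \<or> cle D C) \<longrightarrow> finite Ch)"

definition strictly_below :: "'a set \<Rightarrow> 'b set \<Rightarrow> ('a \<times> 'b) set \<Rightarrow> ('b set \<times> 'a set)
    \<Rightarrow> ('b set \<times> 'a set) set" where
  "strictly_below A B R Cl = {C \<in> concepts A B R. cle C Cl \<and> C \<noteq> Cl}"

definition maximal_below :: "'a set \<Rightarrow> 'b set \<Rightarrow> ('a \<times> 'b) set \<Rightarrow> ('b set \<times> 'a set)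
    \<Rightarrow> ('b set \<times> 'a set) set" where
  "maximal_below A B R Cl = {C \<in> strictly_below A B R Cl.
      \<not> (\<exists>D\<in>strictly_below A B R Cl. cle C D \<and> C \<noteq> D)}"

definition needs_new :: "'a set \<Rightarrow> 'b set \<Rightarrow> ('a \<times> 'b) set \<Rightarrow> ('b set \<times> 'a set)
    \<Rightarrow> ('b set \<times> 'a set) \<Rightarrow> bool" where
  "needs_new A B R Cl C \<longleftrightarrow>
     (\<forall>\<psi>. meet_decomposition A B R C \<psi> \<longrightarrow> Cl \<in> \<psi>) \<and> Atg A B R C = {}"

text \<open>The new attribute attached to the
  concept C is represented as Inr C (fresh, since old attributes are tagged Inl).
  Case (1): C_l^s \<noteq> C_l, one new attribute a* = Inr C_l^s iff needed;
  Case (2): C_l^s = C_l, new attributes a_i* = Inr C_l^{s_i} for i \<in> \<Gamma>'.\<close>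
definition new_attrs :: "'a set \<Rightarrow> 'b set \<Rightarrow> ('a \<times> 'b) set \<Rightarrow> ('b set \<times> 'a set)
    \<Rightarrow> ('b set \<times> 'a set) set" where
  "new_attrs A B R Cl =
     (let Cs = cjoin A B R (strictly_below A B R Cl) in
      if Cs \<noteq> Cl then (if needs_new A B R Cl Cs then {Cs} else {})
      else {C \<in> maximal_below A B R Cl. needs_new A B R Cl C})"

definition Astar :: "'a set \<Rightarrow> 'b set \<Rightarrow> ('a \<times> 'b) set \<Rightarrow> ('b set \<times> 'a set)
    \<Rightarrow> ('a + ('b set \<times> 'a set)) set" where
  "Astar A B R Cl = Inl ` (A - Atg A B R Cl) \<union> Inr ` new_attrs A B R Cl"

definition Rstar :: "'a set \<Rightarrow> 'b set \<Rightarrow> ('a \<times> 'b) set \<Rightarrow> ('b set \<times> 'a set)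
    \<Rightarrow> (('a + ('b set \<times> 'a set)) \<times> 'b) set" where
  "Rstar A B R Cl =
     {(Inl a, b) | a b. a \<in> A - Atg A B R Cl \<and> (a, b) \<in> R} \<union>
     {(Inr C, b) | C b. C \<in> new_attrs A B R Cl \<and> b \<in> fst C}"

end

theory Submission
  imports Defs
begin

text \<open>The extents of a formal context are exactly the intersections (within \<open>B\<close>) of attribute
  extents, and a concept is determined by its extent. So it suffices to show that the attribute
  extents of the new context generate precisely the old extents other than \<open>\<E>(C\<^sub>l)\<close>.

  Every new generator is an old extent different from \<open>\<E>(C\<^sub>l)\<close>; since there are no infinite
  chains, the meet-irreducible \<open>C\<^sub>l\<close> is even completely meet-irreducible, so no intersection of
  such generators yields \<open>\<E>(C\<^sub>l)\<close>. Conversely, an extent not contained in \<open>\<E>(C\<^sub>l)\<close> only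
  involves old generators different from \<open>\<E>(C\<^sub>l)\<close>. An extent \<open>X \<subset> \<E>(C\<^sub>l)\<close> lies below a
  maximal concept \<open>m < C\<^sub>l\<close> and is the intersection of \<open>\<E>(m)\<close> with the old generators
  containing \<open>X\<close> other than \<open>\<E>(C\<^sub>l)\<close>. Finally \<open>\<E>(m)\<close> is generated: by the new attribute of
  Construction M if \<open>m\<close> needs one, otherwise by an attribute generating \<open>m\<close> or by a
  meet-decomposition avoiding \<open>C\<^sub>l\<close>, whose members are not below \<open>C\<^sub>l\<close> by maximality of \<open>m\<close>.\<close>

definition Inter_closure :: "'b set \<Rightarrow> 'b set set \<Rightarrow> 'b set set" where
  "Inter_closure B G = {B \<inter> \<Inter>S | S. S \<subseteq> G}"

definition attribute_extents :: "'a set \<Rightarrow> 'b set \<Rightarrow> ('a \<times> 'b) set \<Rightarrow> 'b set set" where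
  "attribute_extents A B R = (\<lambda>a. down B R {a}) ` A"

lemma Inter_closure_iff: "X \<in> Inter_closure B G \<longleftrightarrow> X = B \<inter> \<Inter>{g \<in> G. X \<subseteq> g}"
proof
  assume "X \<in> Inter_closure B G"
  then obtain S where "S \<subseteq> G" "X = B \<inter> \<Inter>S"
    unfolding Inter_closure_def by blast
  moreover from this have "S \<subseteq> {g \<in> G. X \<subseteq> g}"
    by blast
  ultimately show "X = B \<inter> \<Inter>{g \<in> G. X \<subseteq> g}"
    by blast
qed (auto simp: Inter_closure_def)

lemma Inter_closure_subset: "X \<in> Inter_closure B G \<Longrightarrow> X \<subseteq> B"
  unfolding Inter_closure_def by blast

lemma Inter_closure_generator: "g \<in> G \<Longrightarrow> g \<subseteq> B \<Longrightarrow> g \<in> Inter_closure B G"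
  unfolding Inter_closure_def by (rule CollectI, rule exI[of _ "{g}"]) auto

lemma Inter_closure_Inter:
  assumes "\<X> \<subseteq> Inter_closure B G"
  shows "B \<inter> \<Inter>\<X> \<in> Inter_closure B G"
proof -
  let ?Z = "B \<inter> \<Inter>\<X>"
  have "B \<inter> \<Inter>{g \<in> G. ?Z \<subseteq> g} \<subseteq> X" if "X \<in> \<X>" for X
  proof -
    have "B \<inter> \<Inter>{g \<in> G. ?Z \<subseteq> g} \<subseteq> B \<inter> \<Inter>{g \<in> G. X \<subseteq> g}"
      using that by (intro Int_mono Inter_anti_mono) blast+
    also have "\<dots> = X"
      using assms that by (intro Inter_closure_iff[THEN iffD1, symmetric]) blast
    finally show ?thesis .
  qed
  then have "B \<inter> \<Inter>{g \<in> G. ?Z \<subseteq> g} = ?Z"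
    by blast
  then show ?thesis
    by (simp add: Inter_closure_iff[of ?Z])
qed

lemma Inter_closure_Int:
  assumes "X \<in> Inter_closure B G" "Y \<in> Inter_closure B G"
  shows "X \<inter> Y \<in> Inter_closure B G"
proof -
  have "X \<inter> Y = B \<inter> \<Inter>{X, Y}"
    using Inter_closure_subset[OF assms(1)] by blast
  moreover have "B \<inter> \<Inter>{X, Y} \<in> Inter_closure B G"
    using assms by (intro Inter_closure_Inter) auto
  ultimately show ?thesis
    by simp
qed

lemma Inter_attribute_extents_eq_down: "B \<inter> \<Inter>((\<lambda>a. down B R {a}) ` Y) = down B R Y"
  by (auto simp: down_def)

lemma down_up_down: "Y \<subseteq> A \<Longrightarrow> down B R (up A R (down B R Y)) = down B R Y"
  by (auto simp: down_def up_def)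

lemma concept_eq_extent_up: "C \<in> concepts A B R \<Longrightarrow> C = (fst C, up A R (fst C))"
  unfolding concepts_def by (cases C) simp

lemma concept_extent_subset: "C \<in> concepts A B R \<Longrightarrow> fst C \<subseteq> B"
  unfolding concepts_def down_def by auto

lemma concepts_eqI:
  "C \<in> concepts A B R \<Longrightarrow> D \<in> concepts A B R \<Longrightarrow> fst C = fst D \<Longrightarrow> C = D"
  by (metis concept_eq_extent_up)

lemma concept_iff_Inter_closure:
  "(X, up A R X) \<in> concepts A B R \<longleftrightarrow> X \<in> Inter_closure B (attribute_extents A B R)"
proof
  assume "(X, up A R X) \<in> concepts A B R"
  then have "X = down B R (up A R X)"
    by (simp add: concepts_def)
  also have "\<dots> = B \<inter> \<Inter>((\<lambda>a. down B R {a}) ` up A R X)"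
    by (rule Inter_attribute_extents_eq_down[symmetric])
  finally have "X = B \<inter> \<Inter>((\<lambda>a. down B R {a}) ` up A R X)" .
  moreover have "(\<lambda>a. down B R {a}) ` up A R X \<subseteq> attribute_extents A B R"
    unfolding attribute_extents_def up_def by auto
  ultimately show "X \<in> Inter_closure B (attribute_extents A B R)"
    unfolding Inter_closure_def by blast
next
  assume "X \<in> Inter_closure B (attribute_extents A B R)"
  then obtain S where S: "S \<subseteq> attribute_extents A B R" "X = B \<inter> \<Inter>S"
    unfolding Inter_closure_def by blast
  define Y where "Y = {a \<in> A. down B R {a} \<in> S}"
  have "S = (\<lambda>a. down B R {a}) ` Y"
    using S(1) unfolding Y_def attribute_extents_def by blast
  then have "X = down B R Y"
    using S(2) by (simp add: Inter_attribute_extents_eq_down)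
  moreover have "Y \<subseteq> A"
    unfolding Y_def by auto
  ultimately show "(X, up A R X) \<in> concepts A B R"
    by (simp add: concepts_def down_up_down)
qed

lemma concept_extent_in_Inter_closure:
  "C \<in> concepts A B R \<Longrightarrow> fst C \<in> Inter_closure B (attribute_extents A B R)"
  by (metis concept_eq_extent_up concept_iff_Inter_closure)

lemma bij_betw_fst_concepts:
  "bij_betw fst (concepts A B R) (Inter_closure B (attribute_extents A B R))"
proof (rule bij_betw_imageI)
  show "inj_on fst (concepts A B R)"
    by (auto intro: inj_onI concepts_eqI)
  show "fst ` concepts A B R = Inter_closure B (attribute_extents A B R)"
    using concept_extent_in_Inter_closure concept_iff_Inter_closure
    by (fastforce intro: image_eqI[of _ fst "(_, up A R _)"])
qed

lemma is_glb_extent: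
  assumes "is_glb A B R \<psi> C" "\<psi> \<subseteq> concepts A B R"
  shows "fst C = B \<inter> \<Inter>(fst ` \<psi>)"
proof -
  let ?Z = "B \<inter> \<Inter>(fst ` \<psi>)"
  have "?Z \<in> Inter_closure B (attribute_extents A B R)"
    using assms(2) by (blast intro: Inter_closure_Inter concept_extent_in_Inter_closure)
  then have "(?Z, up A R ?Z) \<in> concepts A B R"
    by (simp add: concept_iff_Inter_closure)
  moreover have "\<forall>D\<in>\<psi>. cle (?Z, up A R ?Z) D"
    unfolding cle_def by auto
  ultimately have "cle (?Z, up A R ?Z) C"
    using assms(1) unfolding is_glb_def by blast
  then have "?Z \<subseteq> fst C"
    by (simp add: cle_def)
  moreover have "fst C \<subseteq> ?Z"
    using assms(1) concept_extent_subset unfolding is_glb_def cle_def by blast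
  ultimately show ?thesis
    by blast
qed

lemma is_lub_cjoin:
  assumes "S \<subseteq> concepts A B R"
  shows "is_lub A B R S (cjoin A B R S)"
proof -
  let ?Z = "down B R (up A R (\<Union>(fst ` S)))"
  let ?C = "(?Z, up A R ?Z)"
  have "up A R (\<Union>(fst ` S)) \<subseteq> A"
    by (auto simp: up_def)
  then have C: "?C \<in> concepts A B R"
    unfolding concepts_def by (simp add: down_up_down)
  have lub: "is_lub A B R S ?C"
    unfolding is_lub_def
  proof (intro conjI ballI impI C)
    fix D assume "D \<in> S"
    then show "cle D ?C"
      using assms concept_extent_subset unfolding cle_def down_def up_def by fastforce
  next
    fix E assume E: "E \<in> concepts A B R" "\<forall>D\<in>S. cle D E"
    then have "?Z \<subseteq> down B R (up A R (fst E))"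
      unfolding cle_def down_def up_def by blast
    also have "\<dots> = fst E"
      using E(1) unfolding concepts_def by auto
    finally show "cle ?C E"
      unfolding cle_def by simp
  qed
  moreover have "C' = ?C" if "is_lub A B R S C'" for C'
    using that lub C concepts_eqI[OF _ C, of C'] unfolding is_lub_def cle_def by blast
  ultimately show ?thesis
    unfolding cjoin_def by (metis theI)
qed

lemma concepts_minus_order_iso:
  assumes "Inter_closure B (attribute_extents A' B R') =
      Inter_closure B (attribute_extents A B R) - {fst Cl}"
    and "Cl \<in> concepts A B R"
  shows "\<exists>f. bij_betw f (concepts A B R - {Cl}) (concepts A' B R') \<and>
           (\<forall>C\<in>concepts A B R - {Cl}. \<forall>D\<in>concepts A B R - {Cl}. cle C D \<longleftrightarrow> cle (f C) (f D))"
proof -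
  let ?g = "inv_into (concepts A' B R') fst"
  have fst_bij: "bij_betw fst (concepts A B R - {Cl}) (Inter_closure B (attribute_extents A' B R'))"
    unfolding assms(1)
    using bij_betw_fst_concepts assms(2) concept_extent_in_Inter_closure[OF assms(2)]
    by (intro bij_betw_DiffI) simp_all
  have fst_g: "fst (?g (fst C)) = fst C" if "C \<in> concepts A B R - {Cl}" for C
  proof -
    have "fst C \<in> Inter_closure B (attribute_extents A' B R')"
      using fst_bij that by (rule bij_betw_apply)
    then show ?thesis
      using bij_betw_fst_concepts[of A' B R'] unfolding bij_betw_def
      by (intro f_inv_into_f) simp
  qed
  show ?thesis
  proof (intro exI conjI)
    show "bij_betw (?g \<circ> fst) (concepts A B R - {Cl}) (concepts A' B R')"
      using fst_bij bij_betw_inv_into[OF bij_betw_fst_concepts] by (rule bij_betw_trans)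
    show "\<forall>C\<in>concepts A B R - {Cl}. \<forall>D\<in>concepts A B R - {Cl}.
        cle C D \<longleftrightarrow> cle ((?g \<circ> fst) C) ((?g \<circ> fst) D)"
      using fst_g by (simp add: cle_def)
  qed
qed

text \<open>Stated for preorderings so that the instance \<open>dual_order\<close> gives well-foundedness of the
  converse order as well.\<close>

context preordering
begin

lemma wf_less_on_if_finite_chains:
  assumes "\<And>Ch. Ch \<subseteq> K \<Longrightarrow> \<forall>x\<in>Ch. \<forall>y\<in>Ch. x \<^bold>\<le> y \<or> y \<^bold>\<le> x \<Longrightarrow> finite Ch"
  shows "wf {(x, y). x \<in> K \<and> y \<in> K \<and> x \<^bold>< y}"
proof (unfold wf_iff_no_infinite_down_chain, rule notI)
  assume "\<exists>f. \<forall>i. (f (Suc i), f i) \<in> {(x, y). x \<in> K \<and> y \<in> K \<and> x \<^bold>< y}"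
  then obtain f where f_in: "\<And>i. f i \<in> K" and f_desc: "\<And>i. f (Suc i) \<^bold>< f i"
    by blast
  have desc: "f j \<^bold>< f i" if "i < j" for i j
    using that by (induction j) (auto simp: less_Suc_eq intro: strict_trans f_desc)
  have "inj f"
    by (rule injI) (metis desc irrefl linorder_neqE_nat)
  moreover have "finite (range f)"
    by (rule assms) (use f_in desc strict_implies_order refl in \<open>auto, metis linorder_neqE_nat\<close>)
  ultimately show False
    using finite_imageD by blast
qed

end

locale irreducible_concept =
  fixes A :: "'a set" and B :: "'b set" and R :: "('a \<times> 'b) set" and Cl :: "'b set \<times> 'a set"
  assumes no_infinite_chains: "no_infinite_chains A B R"
    and meet_irreducible: "meet_irreducible A B R Cl"
begin

abbreviation "L \<equiv> fst Cl"
abbreviation "Ext \<equiv> Inter_closure B (attribute_extents A B R)"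
abbreviation "Ext' \<equiv> Inter_closure B (attribute_extents (Astar A B R Cl) B (Rstar A B R Cl))"
abbreviation "SB \<equiv> strictly_below A B R Cl"
abbreviation "Cs \<equiv> cjoin A B R SB"

lemma Cl_concept: "Cl \<in> concepts A B R"
  using meet_irreducible unfolding meet_irreducible_def by blast

lemma SB_subset: "SB \<subseteq> concepts A B R"
  unfolding strictly_below_def by blast

lemma L_neq_B: "L \<noteq> B"
proof
  assume "L = B"
  then have top: "Cl \<in> concepts A B R \<and> (\<forall>D\<in>concepts A B R. cle D Cl)"
    using Cl_concept concept_extent_subset unfolding cle_def by blast
  have "ctop A B R = Cl"
    unfolding ctop_def
  proof (rule the_equality)
    show "Cl \<in> concepts A B R \<and> (\<forall>D\<in>concepts A B R. cle D Cl)"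
      by (rule top)
    fix C assume "C \<in> concepts A B R \<and> (\<forall>D\<in>concepts A B R. cle D C)"
    then show "C = Cl"
      using top concepts_eqI unfolding cle_def by (metis subset_antisym)
  qed
  then show False
    using meet_irreducible unfolding meet_irreducible_def by blast
qed

lemma Int_neq_L:
  assumes "X \<in> Ext" "Y \<in> Ext" "X \<noteq> L" "Y \<noteq> L"
  shows "X \<inter> Y \<noteq> L"
proof
  assume XY: "X \<inter> Y = L"
  let ?D1 = "(X, up A R X)" and ?D2 = "(Y, up A R Y)"
  have "?D1 \<in> concepts A B R" "?D2 \<in> concepts A B R"
    using assms by (simp_all add: concept_iff_Inter_closure)
  moreover have "?D1 \<noteq> Cl" "?D2 \<noteq> Cl"
    using assms(3,4) by auto
  moreover have "is_glb A B R {?D1, ?D2} Cl"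
    using Cl_concept XY unfolding is_glb_def cle_def by auto
  ultimately show False
    using meet_irreducible unfolding meet_irreducible_def by blast
qed

lemma Ext_chain_finite:
  assumes "Ch \<subseteq> Ext" "\<forall>X\<in>Ch. \<forall>Y\<in>Ch. X \<subseteq> Y \<or> Y \<subseteq> X"
  shows "finite Ch"
proof -
  let ?concept = "\<lambda>X. (X, up A R X)"
  have "?concept ` Ch \<subseteq> concepts A B R"
    using assms(1) by (auto simp: concept_iff_Inter_closure)
  moreover have "\<forall>C\<in>?concept ` Ch. \<forall>D\<in>?concept ` Ch. cle C D \<or> cle D C"
    using assms(2) unfolding cle_def by auto
  ultimately have "finite (?concept ` Ch)"
    using no_infinite_chains unfolding no_infinite_chains_def by blast
  then show ?thesis
    by (rule finite_imageD) (auto intro: inj_onI)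
qed

lemma Ext_has_minimal:
  assumes "Q \<subseteq> Ext" "X \<in> Q"
  obtains Z where "Z \<in> Q" "\<And>Y. Y \<in> Q \<Longrightarrow> \<not> Y \<subset> Z"
proof -
  have "wf {(Y, Z). Y \<in> Ext \<and> Z \<in> Ext \<and> Y \<subset> Z}"
    using Ext_chain_finite by (rule order.wf_less_on_if_finite_chains)
  then obtain Z where "Z \<in> Q" "\<And>Y. (Y, Z) \<in> {(Y, Z). Y \<in> Ext \<and> Z \<in> Ext \<and> Y \<subset> Z} \<Longrightarrow> Y \<notin> Q"
    using assms(2) by (rule wfE_min) blast
  with assms(1) that show ?thesis
    by blast
qed

lemma Ext_has_maximal:
  assumes "Q \<subseteq> Ext" "X \<in> Q"
  obtains Z where "Z \<in> Q" "\<And>Y. Y \<in> Q \<Longrightarrow> \<not> Z \<subset> Y"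
proof -
  have "wf {(Y, Z). Y \<in> Ext \<and> Z \<in> Ext \<and> Z \<subset> Y}"
    using Ext_chain_finite by (rule dual_order.wf_less_on_if_finite_chains) blast+
  then obtain Z where "Z \<in> Q" "\<And>Y. (Y, Z) \<in> {(Y, Z). Y \<in> Ext \<and> Z \<in> Ext \<and> Z \<subset> Y} \<Longrightarrow> Y \<notin> Q"
    using assms(2) by (rule wfE_min) blast
  with assms(1) that show ?thesis
    by blast
qed

text \<open>A minimal finite subintersection equals the whole intersection (no infinite descending
  chains), reducing complete meet-irreducibility to the binary case \<open>Int_neq_L\<close>.\<close>

lemma Inter_neq_L:
  assumes "S \<subseteq> Ext - {L}"
  shows "B \<inter> \<Inter>S \<noteq> L"
proof
  assume eq: "B \<inter> \<Inter>S = L"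
  let ?Fam = "{B \<inter> \<Inter>F | F. finite F \<and> F \<subseteq> S}"
  have "?Fam \<subseteq> Ext"
    using assms Inter_closure_Inter by blast
  moreover have "B \<in> ?Fam"
    by (rule CollectI, rule exI[of _ "{}"]) auto
  ultimately obtain m where "m \<in> ?Fam" and m_min: "\<And>Y. Y \<in> ?Fam \<Longrightarrow> \<not> Y \<subset> m"
    by (rule Ext_has_minimal) blast
  then obtain F where F: "finite F" "F \<subseteq> S" "m = B \<inter> \<Inter>F"
    by blast
  have "m \<subseteq> s" if "s \<in> S" for s
  proof -
    have "m \<inter> s \<in> ?Fam"
      using F that by (intro CollectI exI[of _ "insert s F"]) auto
    then show ?thesis
      using m_min by blast
  qed
  with eq F have "B \<inter> \<Inter>F = L"
    by blast
  moreover have "B \<inter> \<Inter>F \<noteq> L"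
    using F(1,2) assms
  proof (induction F rule: finite_induct)
    case empty
    then show ?case using L_neq_B by simp
  next
    case (insert X F)
    have "B \<inter> \<Inter>F \<in> Ext"
      using insert.prems by (intro Inter_closure_Inter) auto
    moreover have "X \<in> Ext" "X \<noteq> L" "B \<inter> \<Inter>F \<noteq> L"
      using insert by auto
    ultimately have "X \<inter> (B \<inter> \<Inter>F) \<noteq> L"
      using Int_neq_L[of X "B \<inter> \<Inter>F"] by blast
    then show ?case
      by (metis Inter_insert Int_left_commute)
  qed
  ultimately show False
    by blast
qed

lemma strictly_below_iff: "D \<in> SB \<longleftrightarrow> D \<in> concepts A B R \<and> fst D \<subset> L"
  using Cl_concept unfolding strictly_below_def cle_def by (auto dest: concepts_eqI)

lemma cjoin_strictly_below:
  assumes "Cs \<noteq> Cl"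
  shows "Cs \<in> SB" and "\<And>D. D \<in> SB \<Longrightarrow> cle D Cs"
proof -
  have lub: "is_lub A B R SB Cs"
    using SB_subset by (rule is_lub_cjoin)
  have "cle Cs Cl"
    using lub Cl_concept unfolding is_lub_def strictly_below_def by blast
  then show "Cs \<in> SB"
    using lub assms unfolding is_lub_def strictly_below_def by blast
  show "\<And>D. D \<in> SB \<Longrightarrow> cle D Cs"
    using lub unfolding is_lub_def by blast
qed

lemma maximal_below_eq_cjoin:
  assumes "Cs \<noteq> Cl"
  shows "maximal_below A B R Cl = {Cs}"
proof -
  have "m = Cs" if "m \<in> maximal_below A B R Cl" for m
    using that cjoin_strictly_below[OF assms] unfolding maximal_below_def by blast
  moreover have "Cs \<in> maximal_below A B R Cl"
    using cjoin_strictly_below[OF assms] SB_subset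
    unfolding maximal_below_def cle_def by (blast intro: concepts_eqI)
  ultimately show ?thesis
    by blast
qed

lemma new_attrs_subset_maximal_below: "new_attrs A B R Cl \<subseteq> maximal_below A B R Cl"
  using maximal_below_eq_cjoin unfolding new_attrs_def Let_def by auto

lemma needs_new_imp_new_attr:
  assumes "m \<in> maximal_below A B R Cl" "needs_new A B R Cl m"
  shows "m \<in> new_attrs A B R Cl"
proof (cases "Cs = Cl")
  case True
  with assms show ?thesis
    unfolding new_attrs_def Let_def by simp
next
  case False
  with assms(1) have "m = Cs"
    using maximal_below_eq_cjoin by blast
  with False assms(2) show ?thesis
    unfolding new_attrs_def Let_def by simp
qed

lemma attribute_extents_Astar:
  "attribute_extents (Astar A B R Cl) B (Rstar A B R Cl) =
     attribute_extents (A - Atg A B R Cl) B R \<union> fst ` new_attrs A B R Cl"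
proof -
  have "down B (Rstar A B R Cl) {Inl a} = down B R {a}" if "a \<in> A - Atg A B R Cl" for a
    using that unfolding down_def Rstar_def by auto
  moreover have "down B (Rstar A B R Cl) {Inr C} = fst C" if "C \<in> new_attrs A B R Cl" for C
  proof -
    have "fst C \<subseteq> B"
      using that new_attrs_subset_maximal_below SB_subset concept_extent_subset
      unfolding maximal_below_def by blast
    then show ?thesis
      using that unfolding down_def Rstar_def by (auto, metis prod.collapse)
  qed
  ultimately show ?thesis
    unfolding attribute_extents_def Astar_def image_Un image_image by simp
qed

lemma attribute_extent_in_Ext':
  assumes "g \<in> attribute_extents A B R" "g \<noteq> L"
  shows "g \<in> Ext'"
proof -
  obtain a where a: "a \<in> A" "g = down B R {a}"
    using assms(1) unfolding attribute_extents_def by blast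
  then have "a \<notin> Atg A B R Cl"
    using assms(2) unfolding Atg_def by auto
  with a have "g \<in> attribute_extents (A - Atg A B R Cl) B R"
    unfolding attribute_extents_def by blast
  then have "g \<in> attribute_extents (Astar A B R Cl) B (Rstar A B R Cl)"
    by (simp add: attribute_extents_Astar)
  moreover have "g \<subseteq> B"
    using a(2) unfolding down_def by blast
  ultimately show ?thesis
    by (rule Inter_closure_generator)
qed

lemma attribute_extents_Astar_subset: "attribute_extents (Astar A B R Cl) B (Rstar A B R Cl) \<subseteq> Ext - {L}"
proof
  fix g assume "g \<in> attribute_extents (Astar A B R Cl) B (Rstar A B R Cl)"
  then consider (old) a where "a \<in> A - Atg A B R Cl" "g = down B R {a}"
    | (new) C where "C \<in> new_attrs A B R Cl" "g = fst C"
    unfolding attribute_extents_Astar unfolding attribute_extents_def by blast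
  then show "g \<in> Ext - {L}"
  proof cases
    case old
    then have "g \<in> Ext"
      by (intro Inter_closure_generator) (auto simp: attribute_extents_def down_def)
    moreover have "g \<noteq> L"
      using old concept_eq_extent_up[OF Cl_concept] unfolding Atg_def by auto
    ultimately show ?thesis
      by blast
  next
    case new
    then have "C \<in> SB"
      using new_attrs_subset_maximal_below unfolding maximal_below_def by blast
    then show ?thesis
      using new strictly_below_iff concept_extent_in_Inter_closure by blast
  qed
qed

lemma Ext'_subset: "Ext' \<subseteq> Ext - {L}"
proof
  fix X assume "X \<in> Ext'"
  then obtain S where S: "S \<subseteq> attribute_extents (Astar A B R Cl) B (Rstar A B R Cl)"
      and X: "X = B \<inter> \<Inter>S"
    unfolding Inter_closure_def by blast
  from S have "S \<subseteq> Ext - {L}"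
    using attribute_extents_Astar_subset by (rule order_trans)
  then have "B \<inter> \<Inter>S \<in> Ext" "B \<inter> \<Inter>S \<noteq> L"
    by (auto intro: Inter_closure_Inter dest: Inter_neq_L)
  with X show "X \<in> Ext - {L}"
    by simp
qed

lemma Ext'_if_not_subset_L:
  assumes "X \<in> Ext" "\<not> X \<subseteq> L"
  shows "X \<in> Ext'"
proof -
  have "{g \<in> attribute_extents A B R. X \<subseteq> g} \<subseteq> Ext'"
    using assms(2) by (auto intro: attribute_extent_in_Ext')
  then have "B \<inter> \<Inter>{g \<in> attribute_extents A B R. X \<subseteq> g} \<in> Ext'"
    by (rule Inter_closure_Inter)
  moreover have "B \<inter> \<Inter>{g \<in> attribute_extents A B R. X \<subseteq> g} = X"
    using Inter_closure_iff[THEN iffD1, OF assms(1)] by (rule sym)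
  ultimately show ?thesis
    by simp
qed

lemma maximal_below_in_Ext':
  assumes m: "m \<in> maximal_below A B R Cl"
  shows "fst m \<in> Ext'"
proof -
  have m_below: "m \<in> concepts A B R" "fst m \<subset> L"
    using m strictly_below_iff unfolding maximal_below_def by auto
  show ?thesis
  proof (cases "needs_new A B R Cl m")
    case True
    then have "fst m \<in> attribute_extents (Astar A B R Cl) B (Rstar A B R Cl)"
      using needs_new_imp_new_attr[OF m] by (simp add: attribute_extents_Astar)
    then show ?thesis
      using concept_extent_subset[OF m_below(1)] by (rule Inter_closure_generator)
  next
    case False
    then consider (decomposition) \<psi> where "meet_decomposition A B R m \<psi>" "Cl \<notin> \<psi>"
      | (generated) "Atg A B R m \<noteq> {}"
      unfolding needs_new_def by blast
    then show ?thesis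
    proof cases
      case generated
      then have "fst m \<in> attribute_extents A B R"
        unfolding Atg_def attribute_extents_def by force
      then show ?thesis
        using m_below(2) by (blast intro: attribute_extent_in_Ext')
    next
      case decomposition
      then have \<psi>: "\<psi> \<subseteq> concepts A B R" "is_glb A B R \<psi> m" "m \<notin> \<psi>"
        unfolding meet_decomposition_def by auto
      have "fst D \<in> Ext'" if D: "D \<in> \<psi>" for D
      proof (rule Ext'_if_not_subset_L)
        show "fst D \<in> Ext"
          using D \<psi>(1) by (blast intro: concept_extent_in_Inter_closure)
        show "\<not> fst D \<subseteq> L"
        proof
          assume "fst D \<subseteq> L"
          moreover have "fst D \<noteq> L"
            using D \<psi>(1) decomposition(2) Cl_concept concepts_eqI by blast
          ultimately have "D \<in> SB"
            using D \<psi>(1) strictly_below_iff by blast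
          moreover have "cle m D" "m \<noteq> D"
            using D \<psi>(2,3) unfolding is_glb_def by auto
          ultimately show False
            using m unfolding maximal_below_def by blast
        qed
      qed
      then have "B \<inter> \<Inter>(fst ` \<psi>) \<in> Ext'"
        by (blast intro: Inter_closure_Inter)
      then show ?thesis
        using is_glb_extent[OF \<psi>(2,1)] by simp
    qed
  qed
qed

lemma exists_maximal_below_above:
  assumes "X \<in> Ext" "X \<subset> L"
  obtains m where "m \<in> maximal_below A B R Cl" "X \<subseteq> fst m"
proof -
  let ?Q = "{Z \<in> Ext. X \<subseteq> Z \<and> Z \<subset> L}"
  have "?Q \<subseteq> Ext" "X \<in> ?Q"
    using assms by auto
  then obtain Z where Z: "Z \<in> ?Q" and Z_max: "\<And>Y. Y \<in> ?Q \<Longrightarrow> \<not> Z \<subset> Y"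
    by (rule Ext_has_maximal) blast
  let ?m = "(Z, up A R Z)"
  have m_SB: "?m \<in> SB"
    using Z strictly_below_iff concept_iff_Inter_closure[of Z A R B] by auto
  have "?m \<in> maximal_below A B R Cl"
    unfolding maximal_below_def
  proof (intro CollectI conjI m_SB notI)
    assume "\<exists>D\<in>SB. cle ?m D \<and> ?m \<noteq> D"
    then obtain D where D: "D \<in> SB" "Z \<subseteq> fst D" "?m \<noteq> D"
      unfolding cle_def by auto
    then have "fst D \<in> ?Q"
      using Z strictly_below_iff concept_extent_in_Inter_closure by blast
    moreover have "Z \<noteq> fst D"
      using D(1,3) concept_eq_extent_up[of D] strictly_below_iff by auto
    ultimately show False
      using Z_max D(2) by blast
  qed
  then show ?thesis
    using Z that by simp
qed

lemma Ext'_eq_Ext_minus_L: "Ext' = Ext - {L}"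
proof
  show "Ext' \<subseteq> Ext - {L}"
    by (rule Ext'_subset)
  show "Ext - {L} \<subseteq> Ext'"
  proof
    fix X assume "X \<in> Ext - {L}"
    then have X: "X \<in> Ext" "X \<noteq> L"
      by auto
    show "X \<in> Ext'"
    proof (cases "X \<subseteq> L")
      case False
      with X(1) show ?thesis
        by (rule Ext'_if_not_subset_L)
    next
      case True
      with X have "X \<subset> L"
        by blast
      with X(1) obtain m where m: "m \<in> maximal_below A B R Cl" "X \<subseteq> fst m"
        by (rule exists_maximal_below_above)
      let ?X' = "B \<inter> \<Inter>{g \<in> attribute_extents A B R. X \<subseteq> g \<and> g \<noteq> L}"
      have X'_in: "?X' \<in> Ext'"
        by (rule Inter_closure_Inter) (auto intro: attribute_extent_in_Ext')
      have m_in: "fst m \<in> Ext'"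
        using m(1) by (rule maximal_below_in_Ext')
      have "?X' \<inter> fst m = X"
      proof
        have "fst m \<subseteq> L"
          using m(1) strictly_below_iff unfolding maximal_below_def by blast
        then have "?X' \<inter> fst m \<subseteq> B \<inter> \<Inter>{g \<in> attribute_extents A B R. X \<subseteq> g}"
          by blast
        also have "\<dots> = X"
          by (rule Inter_closure_iff[THEN iffD1, OF X(1), symmetric])
        finally show "?X' \<inter> fst m \<subseteq> X" .
        show "X \<subseteq> ?X' \<inter> fst m"
          using Inter_closure_subset[OF X(1)] m(2) by blast
      qed
      with Inter_closure_Int[OF X'_in m_in] show ?thesis
        by simp
    qed
  qed
qed

end

theorem mainTheorem9:
  fixes A :: "'a set" and B :: "'b set" and R :: "('a \<times> 'b) set"
    and Cl :: "'b set \<times> 'a set"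
  assumes "R \<subseteq> A \<times> B"
    and "no_infinite_chains A B R"
    and "meet_irreducible A B R Cl"
  shows "\<exists>f. bij_betw f (concepts A B R - {Cl}) (concepts (Astar A B R Cl) B (Rstar A B R Cl)) \<and>
           (\<forall>C\<in>concepts A B R - {Cl}. \<forall>D\<in>concepts A B R - {Cl}. cle C D \<longleftrightarrow> cle (f C) (f D))"
proof -
  interpret irreducible_concept A B R Cl
    using assms(2,3) by unfold_locales
  show ?thesis
    using Ext'_eq_Ext_minus_L Cl_concept by (rule concepts_minus_order_iso)
qed

end
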